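(* Let $\Omega\subset\mathbb{R}^N$ be a bounded domain, let $X=C(\bar{\Omega})$, let $d_I>0$, and let $\gamma$ be a positive continuous function on $\bar{\Omega}$. Let $J:\mathbb{R}^N\to\mathbb{R}$ be continuous with $J(0)>0$, $J(x)=J(-x)\ge 0$, $\int_{\mathbb{R}^N}J(x)\,dx=1$, and $\int_{\Omega}J(x-y)\,dy\not\equiv 1$. Define the bounded linear operator $A:X\to X$ by $$A[u](x)=d_I\left(\int_{\Omega}J(x-y)u(y)\,dy-u(x)\right)-\gamma(x)u(x),\quad x\in\bar\Omega.$$ Then the spectral bound of $A$ is negative: $S(A)<0$.
   Context: For a closed operator $\mathscr{A}$ on $X$ with spectrum $\sigma(\mathscr{A})$, the spectral bound is $S(\mathscr{A})=\sup\{\mathrm{Re}\,\lambda:\lambda\in\sigma(\mathscr{A})\}$. *)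

theory Defs
  imports "HOL-Analysis.Analysis"
begin

text \<open>The space C(closure Omega), complexified; functions are normalised to be 0
  outside the closed set so that elements are canonical representatives.\<close>
definition CX :: "'a::topological_space set \<Rightarrow> ('a \<Rightarrow> complex) set" where
  "CX S = {u. continuous_on S u \<and> (\<forall>x. x \<notin> S \<longrightarrow> u x = 0)}"

definition op_spectrum ::
  "('a \<Rightarrow> complex) set \<Rightarrow> (('a \<Rightarrow> complex) \<Rightarrow> ('a \<Rightarrow> complex)) \<Rightarrow> complex set" where
  "op_spectrum X A = {\<mu>. \<not> bij_betw (\<lambda>u x. \<mu> * u x - A u x) X X}"

text \<open>Spectral bound S(A) = sup of real parts of the spectrum (in ereal, so sup of empty is -infinity).\<close>
definition spectral_bound ::
  "('a \<Rightarrow> complex) set \<Rightarrow> (('a \<Rightarrow> complex) \<Rightarrow> ('a \<Rightarrow> complex)) \<Rightarrow> ereal" where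
  "spectral_bound X A = (SUP \<mu>\<in>op_spectrum X A. ereal (Re \<mu>))"

definition nonlocal_op ::
  "real \<Rightarrow> (real^'n \<Rightarrow> real) \<Rightarrow> (real^'n \<Rightarrow> real) \<Rightarrow> (real^'n) set
     \<Rightarrow> (real^'n \<Rightarrow> complex) \<Rightarrow> (real^'n \<Rightarrow> complex)" where
  "nonlocal_op dI J \<gamma> \<Omega> u x =
     (if x \<in> closure \<Omega> then
        complex_of_real dI * (integral \<Omega> (\<lambda>y. complex_of_real (J (x - y)) * u y) - u x)
        - complex_of_real (\<gamma> x) * u x
      else 0)"

end

theory Submission
  imports Defs
begin

text \<open>Write the operator as \<open>A = dI K - (dI + \<gamma>)\<close>, where \<open>K\<close> is convolution with \<open>J\<close>
  restricted to \<open>\<Omega>\<close>. Since \<open>J \<ge> 0\<close> has total mass \<open>1\<close>, \<open>K\<close> does not increase the sup norm.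
  Hence for \<open>Re \<mu> > - min \<gamma>\<close> the multiplier \<open>c = \<mu> + dI + \<gamma>\<close> satisfies \<open>\<bar>c\<bar> > dI\<close>
  uniformly, and \<open>\<mu> - A = c - dI K\<close> is bijective on \<open>C(closure \<Omega>)\<close>: the equation
  \<open>(\<mu> - A) u = f\<close> is the fixed-point equation of \<open>u \<mapsto> (f + dI K u) / c\<close>, a contraction
  for the sup norm. So \<open>S(A) \<le> - min \<gamma> < 0\<close>.\<close>

definition uniform_contraction_on ::
  "'a set \<Rightarrow> ('a \<Rightarrow> 'b::real_normed_vector) set \<Rightarrow> (('a \<Rightarrow> 'b) \<Rightarrow> 'a \<Rightarrow> 'b) \<Rightarrow> real \<Rightarrow> bool" where
  "uniform_contraction_on S X T q \<longleftrightarrow>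
     (\<forall>u\<in>X. \<forall>v\<in>X. \<forall>B\<ge>0. (\<forall>y\<in>S. norm (u y - v y) \<le> B) \<longrightarrow> (\<forall>x\<in>S. norm (T u x - T v x) \<le> q * B))"

lemma uniform_contraction_onD:
  "uniform_contraction_on S X T q \<Longrightarrow> u \<in> X \<Longrightarrow> v \<in> X \<Longrightarrow> 0 \<le> B \<Longrightarrow>
    \<forall>y\<in>S. norm (u y - v y) \<le> B \<Longrightarrow> x \<in> S \<Longrightarrow> norm (T u x - T v x) \<le> q * B"
  unfolding uniform_contraction_on_def by blast

lemma uniform_contraction_on_funpow:
  assumes T: "uniform_contraction_on S X T q" "\<And>u. u \<in> X \<Longrightarrow> T u \<in> X" and "0 \<le> q"
    and uv: "u \<in> X" "v \<in> X" and B: "0 \<le> B" "\<forall>y\<in>S. norm (u y - v y) \<le> B"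
  shows "\<forall>y\<in>S. norm ((T ^^ k) u y - (T ^^ k) v y) \<le> q ^ k * B"
proof (induction k)
  case 0
  then show ?case using B by simp
next
  case (Suc k)
  have "(T ^^ k) u \<in> X" "(T ^^ k) v \<in> X"
    by (induction k) (simp_all add: T(2) uv)
  with Suc show ?case
    using uniform_contraction_onD[OF T(1)] \<open>0 \<le> q\<close> B(1) by (simp add: mult.assoc)
qed

lemma CX_bounded_diff:
  assumes "compact S" "u \<in> CX S" "v \<in> CX S"
  obtains B where "B > 0" "\<forall>y\<in>S. norm (u y - v y) \<le> B"
proof -
  have "continuous_on S (\<lambda>y. u y - v y)"
    using assms by (intro continuous_intros) (auto simp: CX_def)
  then have "bounded ((\<lambda>y. u y - v y) ` S)"
    using \<open>compact S\<close> by (intro compact_imp_bounded compact_continuous_image)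
  then show ?thesis
    using that by (auto simp: bounded_pos)
qed

lemma funpow_zero_in_CX:
  assumes "\<And>u. u \<in> CX S \<Longrightarrow> T u \<in> CX S"
  shows "(T ^^ k) (\<lambda>_. 0) \<in> CX S"
proof (induction k)
  case 0
  show ?case by (simp add: CX_def)
next
  case (Suc k)
  then show ?case by (simp add: assms)
qed

lemma CX_contraction_fixpoint_unique:
  fixes T :: "('a::topological_space \<Rightarrow> complex) \<Rightarrow> 'a \<Rightarrow> complex"
  assumes "compact S" and T: "uniform_contraction_on S (CX S) T q" "\<And>u. u \<in> CX S \<Longrightarrow> T u \<in> CX S"
    and q: "0 \<le> q" "q < 1"
    and u: "u \<in> CX S" "T u = u" and v: "v \<in> CX S" "T v = v"
  shows "u = v"
proof
  fix x
  show "u x = v x"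
  proof (cases "x \<in> S")
    case True
    obtain B where B: "B > 0" "\<forall>y\<in>S. norm (u y - v y) \<le> B"
      using CX_bounded_diff[OF \<open>compact S\<close> u(1) v(1)] .
    have fixed: "(T ^^ k) w = w" if "T w = w" for w k
      using that by (induction k) simp_all
    have "\<forall>y\<in>S. norm ((T ^^ k) u y - (T ^^ k) v y) \<le> q ^ k * B" for k
      using B by (intro uniform_contraction_on_funpow[OF T q(1) u(1) v(1)]) auto
    then have bound: "norm (u x - v x) \<le> q ^ k * B" for k
      using True by (simp only: fixed u(2) v(2))
    have "(\<lambda>k. q ^ k * B) \<longlonglongrightarrow> 0"
      using q by (intro tendsto_mult_left_zero LIMSEQ_power_zero) auto
    then have "norm (u x - v x) \<le> 0"
      using bound LIMSEQ_le_const by blast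
    then show ?thesis by simp
  next
    case False
    then show ?thesis using u v by (simp add: CX_def)
  qed
qed

lemma CX_contraction_iterates_converge:
  fixes T :: "('a::topological_space \<Rightarrow> complex) \<Rightarrow> 'a \<Rightarrow> complex"
  assumes "compact S" and T: "uniform_contraction_on S (CX S) T q" "\<And>u. u \<in> CX S \<Longrightarrow> T u \<in> CX S"
    and q: "0 \<le> q" "q < 1"
  obtains u where "u \<in> CX S" "uniform_limit S (\<lambda>k. (T ^^ k) (\<lambda>_. 0)) u sequentially"
proof -
  define U where "U k = (T ^^ k) (\<lambda>_. 0)" for k
  have U: "U k \<in> CX S" for k
    unfolding U_def using T(2) by (rule funpow_zero_in_CX)
  obtain C where C: "C > 0" "\<forall>y\<in>S. norm (U 1 y - U 0 y) \<le> C"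
    using CX_bounded_diff[OF \<open>compact S\<close> U U] .
  have "\<forall>y\<in>S. norm ((T ^^ k) (U 1) y - (T ^^ k) (U 0) y) \<le> q ^ k * C" for k
    using C by (intro uniform_contraction_on_funpow[OF T q(1) U U]) auto
  then have step: "norm (U (Suc k) y - U k y) \<le> q ^ k * C" if "y \<in> S" for k y
    using that by (simp add: U_def funpow_Suc_right del: funpow.simps)
  define u where "u y = (\<Sum>k. U (Suc k) y - U k y)" for y
  have "uniform_limit S (\<lambda>n y. \<Sum>k<n. U (Suc k) y - U k y) u sequentially"
    unfolding u_def using step q
    by (intro Weierstrass_m_test[where M = "\<lambda>k. q ^ k * C"]) (auto intro: summable_mult2)
  moreover have "(\<Sum>k<n. U (Suc k) y - U k y) = U n y" for n y
    using sum_lessThan_telescope[of "\<lambda>k. U k y" n] by (simp add: U_def)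
  ultimately have lim: "uniform_limit S U u sequentially"
    by simp
  have "continuous_on S u"
    by (rule uniform_limit_theorem[OF _ lim]) (use U in \<open>auto simp: CX_def\<close>)
  moreover have "u y = 0" if "y \<notin> S" for y
    using U that by (simp add: u_def CX_def)
  moreover have "U = (\<lambda>k. (T ^^ k) (\<lambda>_. 0))"
    by (simp add: fun_eq_iff U_def)
  ultimately show ?thesis
    using that lim by (auto simp: CX_def)
qed

lemma CX_contraction_fixpoint_exists:
  fixes T :: "('a::topological_space \<Rightarrow> complex) \<Rightarrow> 'a \<Rightarrow> complex"
  assumes "compact S" and T: "uniform_contraction_on S (CX S) T q" "\<And>u. u \<in> CX S \<Longrightarrow> T u \<in> CX S"
    and q: "0 \<le> q" "q < 1"
  shows "\<exists>u\<in>CX S. T u = u"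
proof -
  obtain u where u: "u \<in> CX S" and lim: "uniform_limit S (\<lambda>k. (T ^^ k) (\<lambda>_. 0)) u sequentially"
    using CX_contraction_iterates_converge[OF assms] .
  define U where "U k = (T ^^ k) (\<lambda>_. 0)" for k
  have U: "U k \<in> CX S" for k
    unfolding U_def using T(2) by (rule funpow_zero_in_CX)
  have "T u z = u z" for z
  proof (cases "z \<in> S")
    case True
    have "(\<lambda>n. T (U n) z) \<longlonglongrightarrow> T u z"
    proof (rule tendstoI)
      fix e :: real
      assume "e > 0"
      show "\<forall>\<^sub>F n in sequentially. dist (T (U n) z) (T u z) < e"
        using uniform_limitD[OF lim \<open>e > 0\<close>]
      proof eventually_elim
        case (elim n)
        then have "norm (T (U n) z - T u z) \<le> q * e"
          using uniform_contraction_onD[OF T(1) U[of n] u, of e z] True \<open>e > 0\<close>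
          by (simp add: U_def dist_norm less_imp_le)
        also have "\<dots> < e"
          using q \<open>e > 0\<close> by simp
        finally show ?case by (simp add: dist_norm)
      qed
    qed
    moreover have "(\<lambda>n. T (U n) z) \<longlonglongrightarrow> u z"
      using LIMSEQ_Suc[OF tendsto_uniform_limitI[OF lim True]] by (simp add: U_def)
    ultimately show ?thesis
      using LIMSEQ_unique by blast
  next
    case False
    then show ?thesis using T(2)[OF u] u by (simp add: CX_def)
  qed
  with u show ?thesis by blast
qed

lemma continuous_on_closure_absolutely_integrable_on:
  fixes f :: "'a::euclidean_space \<Rightarrow> 'b::euclidean_space"
  assumes S: "S \<in> sets lebesgue" "bounded S" and f: "continuous_on (closure S) f"
  shows "f absolutely_integrable_on S"
proof -
  have "compact (f ` closure S)"
    using S(2) f by (intro compact_continuous_image) (auto simp: compact_closure)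
  then obtain B where B: "\<forall>x\<in>closure S. norm (f x) \<le> B"
    by (auto dest!: compact_imp_bounded simp: bounded_iff)
  show ?thesis
  proof (rule measurable_bounded_by_integrable_imp_absolutely_integrable[where g = "\<lambda>_. B"])
    show "f \<in> borel_measurable (lebesgue_on S)"
      using continuous_on_subset[OF f closure_subset] S(1)
      by (rule continuous_imp_measurable_on_sets_lebesgue)
    show "(\<lambda>_. B) integrable_on S"
      using S by (intro integrable_on_const bounded_set_imp_lmeasurable)
  qed (use S B closure_subset in auto)
qed

lemma integral_translate_reflect_le:
  fixes J :: "'a::euclidean_space \<Rightarrow> real"
  assumes S: "S \<in> sets lebesgue" "bounded S"
    and J: "continuous_on UNIV J" "\<And>z. 0 \<le> J z" "J integrable_on UNIV"
  shows "(\<lambda>y. J (x - y)) integrable_on S" and "integral S (\<lambda>y. J (x - y)) \<le> integral UNIV J"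
proof -
  have cont: "continuous_on UNIV (\<lambda>y. J (x - y))"
    by (intro continuous_on_compose2[OF J(1)] continuous_intros) auto
  then show int: "(\<lambda>y. J (x - y)) integrable_on S"
    using continuous_on_closure_absolutely_integrable_on[OF S] continuous_on_subset
    by (blast intro: set_lebesgue_integral_eq_integral(1))
  obtain a b where ab: "S \<subseteq> cbox a b"
    using S(2) bounded_subset_cbox_symmetric by metis
  have "integral S (\<lambda>y. J (x - y)) \<le> integral (cbox a b) (\<lambda>y. J (x - y))"
    using ab int cont J(2) by (intro integral_subset_le integrable_continuous) (auto intro: continuous_on_subset)
  also have "\<dots> = integral (cbox (-b) (-a)) (\<lambda>z. J (z + x))"
    using integral_reflect[of "-a" "-b" "\<lambda>z. J (z + x)"] by (simp add: algebra_simps)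
  also have "\<dots> = integral (cbox (x - b) (x - a)) J"
    using integral_shift_cbox[of "x - b" x "x - a" J] by simp
  also have "\<dots> \<le> integral UNIV J"
    using J by (intro integral_subset_le integrable_continuous) (auto intro: continuous_on_subset)
  finally show "integral S (\<lambda>y. J (x - y)) \<le> integral UNIV J" .
qed

definition kernel_op :: "('a::euclidean_space \<Rightarrow> real) \<Rightarrow> 'a set \<Rightarrow> ('a \<Rightarrow> complex) \<Rightarrow> 'a \<Rightarrow> complex" where
  "kernel_op J \<Omega> u x = integral \<Omega> (\<lambda>y. complex_of_real (J (x - y)) * u y)"

context
  fixes \<Omega> :: "'a::euclidean_space set" and J :: "'a \<Rightarrow> real"
  assumes \<Omega>: "\<Omega> \<in> sets lebesgue" "bounded \<Omega>"
    and J: "continuous_on UNIV J" "\<And>z. 0 \<le> J z" "(J has_integral 1) UNIV"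
begin

lemma kernel_integrand_integrable:
  assumes "continuous_on (closure \<Omega>) u"
  shows "(\<lambda>y. complex_of_real (J (x - y)) * u y) integrable_on \<Omega>"
proof -
  have "continuous_on (closure \<Omega>) (\<lambda>y. complex_of_real (J (x - y)) * u y)"
    by (intro continuous_intros assms continuous_on_compose2[OF J(1)]) auto
  then show ?thesis
    using continuous_on_closure_absolutely_integrable_on[OF \<Omega>]
    by (blast intro: set_lebesgue_integral_eq_integral(1))
qed

lemma kernel_op_diff:
  assumes "continuous_on (closure \<Omega>) u" "continuous_on (closure \<Omega>) v"
  shows "kernel_op J \<Omega> (\<lambda>y. u y - v y) x = kernel_op J \<Omega> u x - kernel_op J \<Omega> v x"
  unfolding kernel_op_def
  using integral_diff[OF kernel_integrand_integrable[OF assms(1)] kernel_integrand_integrable[OF assms(2)]]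
  by (simp add: algebra_simps)

lemma norm_kernel_op_le:
  assumes u: "continuous_on (closure \<Omega>) u" and B: "0 \<le> B" "\<forall>y\<in>\<Omega>. norm (u y) \<le> B"
  shows "norm (kernel_op J \<Omega> u x) \<le> B"
proof -
  note J_int = integral_translate_reflect_le[OF \<Omega> J(1,2) has_integral_integrable[OF J(3)]]
  have "norm (kernel_op J \<Omega> u x) \<le> integral \<Omega> (\<lambda>y. B * J (x - y))"
    unfolding kernel_op_def
  proof (rule integral_norm_bound_integral)
    show "(\<lambda>y. B * J (x - y)) integrable_on \<Omega>"
      using integrable_on_cmult_left[OF J_int(1), of B] by simp
    show "norm (complex_of_real (J (x - y)) * u y) \<le> B * J (x - y)" if "y \<in> \<Omega>" for y
      using B(2) that J(2)[of "x - y"] by (simp add: norm_mult mult.commute[of B] mult_left_mono)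
  qed (rule kernel_integrand_integrable[OF u])
  also have "\<dots> = B * integral \<Omega> (\<lambda>y. J (x - y))"
    by simp
  also have "\<dots> \<le> B"
    using J_int(2)[of x] J(3) B(1) by (simp add: integral_unique mult_left_le)
  finally show ?thesis .
qed

lemma norm_kernel_op_diff_le:
  assumes "continuous_on (closure \<Omega>) u" "continuous_on (closure \<Omega>) v"
    and "0 \<le> B" "\<forall>y\<in>\<Omega>. norm (u y - v y) \<le> B"
  shows "norm (kernel_op J \<Omega> u x - kernel_op J \<Omega> v x) \<le> B"
  using norm_kernel_op_le[of "\<lambda>y. u y - v y" B x] kernel_op_diff[of u v x] assms
  by (auto intro: continuous_intros)

lemma continuous_on_kernel_op:
  assumes u: "continuous_on (closure \<Omega>) u"
  shows "continuous_on (closure \<Omega>) (kernel_op J \<Omega> u)"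
proof -
  have "compact (closure \<Omega>)"
    using \<Omega>(2) by (simp add: compact_closure)
  then have "compact {x - y | x y. x \<in> closure \<Omega> \<and> y \<in> closure \<Omega>}"
    by (intro compact_differences)
  then have "bounded (J ` {x - y | x y. x \<in> closure \<Omega> \<and> y \<in> closure \<Omega>})"
    by (intro compact_imp_bounded compact_continuous_image continuous_on_subset[OF J(1)]) auto
  then obtain M where M: "\<forall>x\<in>closure \<Omega>. \<forall>y\<in>closure \<Omega>. norm (J (x - y)) \<le> M"
    unfolding bounded_iff by blast
  obtain B where B: "\<forall>y\<in>closure \<Omega>. norm (u y) \<le> B"
    using compact_continuous_image[OF u \<open>compact (closure \<Omega>)\<close>]
    by (auto dest!: compact_imp_bounded simp: bounded_iff)
  have "isCont J z" for z
    using J(1) by (simp add: continuous_on_eq_continuous_at)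
  show ?thesis
  proof (rule continuous_on_sequentiallyI)
    fix s a
    assume s: "\<forall>n. s n \<in> closure \<Omega>" and a: "a \<in> closure \<Omega>" and lim: "s \<longlonglongrightarrow> a"
    show "(\<lambda>n. kernel_op J \<Omega> u (s n)) \<longlonglongrightarrow> kernel_op J \<Omega> u a"
      unfolding kernel_op_def
    proof (rule dominated_convergence(2))
      show "(\<lambda>_. M * B) integrable_on \<Omega>"
        using \<Omega> by (intro integrable_on_const bounded_set_imp_lmeasurable)
      show "norm (complex_of_real (J (s n - y)) * u y) \<le> M * B" if "y \<in> \<Omega>" for n y
      proof -
        have "norm (J (s n - y)) \<le> M" "norm (u y) \<le> B"
          using M B s that closure_subset by blast+
        then have "norm (J (s n - y)) * norm (u y) \<le> M * B"
          by (intro mult_mono') auto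
        then show ?thesis
          by (simp add: norm_mult)
      qed
      show "(\<lambda>n. complex_of_real (J (s n - y)) * u y) \<longlonglongrightarrow> complex_of_real (J (a - y)) * u y" for y
        by (intro tendsto_intros isCont_tendsto_compose[OF \<open>\<And>z. isCont J z\<close>] lim)
    qed (rule kernel_integrand_integrable[OF u])
  qed
qed

lemma kernel_equation_unique_solution:
  fixes c :: "'a \<Rightarrow> complex" and dI a :: real
  assumes c: "continuous_on (closure \<Omega>) c" "\<And>x. x \<in> closure \<Omega> \<Longrightarrow> a \<le> norm (c x)"
    and dI: "0 \<le> dI" "dI < a" and f: "f \<in> CX (closure \<Omega>)"
  shows "\<exists>!u. u \<in> CX (closure \<Omega>) \<and> (\<forall>x\<in>closure \<Omega>. c x * u x - dI * kernel_op J \<Omega> u x = f x)"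
proof -
  define S where "S = closure \<Omega>"
  define T where "T u x = (if x \<in> S then (f x + dI * kernel_op J \<Omega> u x) / c x else 0)" for u x
  have "compact S"
    using \<Omega>(2) by (simp add: S_def compact_closure)
  have c_nz: "c x \<noteq> 0" if "x \<in> S" for x
    using c(2) dI that by (force simp: S_def)
  have T_maps: "T u \<in> CX S" if "u \<in> CX S" for u
  proof -
    have "continuous_on S (\<lambda>x. (f x + dI * kernel_op J \<Omega> u x) / c x)"
      using that f c(1) c_nz continuous_on_kernel_op
      by (intro continuous_intros) (auto simp: CX_def S_def)
    then show ?thesis
      by (auto simp: CX_def T_def cong: continuous_on_cong)
  qed
  have "uniform_contraction_on S (CX S) T (dI / a)"
    unfolding uniform_contraction_on_def
  proof (intro ballI allI impI)
    fix u v B x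
    assume uv: "u \<in> CX S" "v \<in> CX S" and B: "0 \<le> B" "\<forall>y\<in>S. norm (u y - v y) \<le> B" and "x \<in> S"
    have "T u x - T v x = dI * (kernel_op J \<Omega> u x - kernel_op J \<Omega> v x) / c x"
      using \<open>x \<in> S\<close> by (simp add: T_def diff_divide_distrib[symmetric] algebra_simps)
    then have "norm (T u x - T v x) = dI * norm (kernel_op J \<Omega> u x - kernel_op J \<Omega> v x) / norm (c x)"
      using dI by (simp add: norm_mult norm_divide)
    also have "\<dots> \<le> dI * B / a"
    proof (rule frac_le)
      show "dI * norm (kernel_op J \<Omega> u x - kernel_op J \<Omega> v x) \<le> dI * B"
        using uv B closure_subset dI
        by (intro mult_left_mono norm_kernel_op_diff_le) (auto simp: CX_def S_def)
      show "a \<le> norm (c x)"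
        using c(2) \<open>x \<in> S\<close> by (simp add: S_def)
    qed (use dI B in auto)
    finally show "norm (T u x - T v x) \<le> dI / a * B"
      by simp
  qed
  moreover have "0 \<le> dI / a" "dI / a < 1"
    using dI by auto
  ultimately have fixpoint: "\<exists>u\<in>CX S. T u = u" "\<And>u v. u \<in> CX S \<Longrightarrow> T u = u \<Longrightarrow> v \<in> CX S \<Longrightarrow> T v = v \<Longrightarrow> u = v"
    using CX_contraction_fixpoint_exists[where T = T and q = "dI / a", OF \<open>compact S\<close> _ T_maps]
      CX_contraction_fixpoint_unique[where T = T and q = "dI / a", OF \<open>compact S\<close> _ T_maps]
    by blast+
  have "(\<forall>x\<in>S. c x * u x - dI * kernel_op J \<Omega> u x = f x) \<longleftrightarrow> T u = u" if "u \<in> CX S" for u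
    using that f c_nz by (auto simp: fun_eq_iff T_def CX_def S_def field_simps)
  with fixpoint show ?thesis
    unfolding S_def by blast
qed

end

lemma bij_betw_shifted_nonlocal_op:
  fixes \<Omega> :: "(real^'n) set" and J \<gamma> :: "real^'n \<Rightarrow> real" and dI a :: real and \<mu> :: complex
  assumes \<Omega>: "\<Omega> \<in> sets lebesgue" "bounded \<Omega>"
    and J: "continuous_on UNIV J" "\<And>z. 0 \<le> J z" "(J has_integral 1) UNIV"
    and dI: "0 \<le> dI" "dI < a" and \<gamma>: "continuous_on (closure \<Omega>) \<gamma>"
    and a: "\<And>x. x \<in> closure \<Omega> \<Longrightarrow> a \<le> norm (\<mu> + dI + \<gamma> x)"
  shows "bij_betw (\<lambda>u x. \<mu> * u x - nonlocal_op dI J \<gamma> \<Omega> u x) (CX (closure \<Omega>)) (CX (closure \<Omega>))"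
proof -
  define L where "L u x = \<mu> * u x - nonlocal_op dI J \<gamma> \<Omega> u x" for u x
  define c where "c x = \<mu> + dI + \<gamma> x" for x
  have L: "L u x = (if x \<in> closure \<Omega> then c x * u x - dI * kernel_op J \<Omega> u x else 0)"
    if "u \<in> CX (closure \<Omega>)" for u x
    using that by (simp add: L_def c_def CX_def nonlocal_op_def kernel_op_def algebra_simps)
  have c: "continuous_on (closure \<Omega>) c"
    unfolding c_def by (intro continuous_intros \<gamma>)
  have L_maps: "L u \<in> CX (closure \<Omega>)" if "u \<in> CX (closure \<Omega>)" for u
  proof -
    have "continuous_on (closure \<Omega>) (\<lambda>x. c x * u x - dI * kernel_op J \<Omega> u x)"
      using that c continuous_on_kernel_op[OF \<Omega> J]
      by (intro continuous_intros) (auto simp: CX_def)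
    then show ?thesis
      using that by (auto simp: CX_def L cong: continuous_on_cong)
  qed
  have solves_iff: "L u = f \<longleftrightarrow> (\<forall>x\<in>closure \<Omega>. c x * u x - dI * kernel_op J \<Omega> u x = f x)"
    if "u \<in> CX (closure \<Omega>)" "f \<in> CX (closure \<Omega>)" for u f
    using that by (auto simp: fun_eq_iff L CX_def)
  have unique_solution: "\<exists>!u. u \<in> CX (closure \<Omega>) \<and> L u = f" if "f \<in> CX (closure \<Omega>)" for f
    using kernel_equation_unique_solution[OF \<Omega> J c _ dI that] a
    by (simp add: solves_iff[OF _ that] c_def cong: conj_cong)
  have "inj_on L (CX (closure \<Omega>))"
    using unique_solution[OF L_maps] by (auto intro!: inj_onI)
  moreover have "L ` CX (closure \<Omega>) = CX (closure \<Omega>)"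
    using L_maps unique_solution by blast
  ultimately show ?thesis
    by (simp add: bij_betw_def L_def[abs_def])
qed

theorem proposition2p4:
  fixes \<Omega> :: "(real^'n) set" and J :: "real^'n \<Rightarrow> real" and \<gamma> :: "real^'n \<Rightarrow> real"
    and dI :: real
  assumes "open \<Omega>" and "connected \<Omega>" and "\<Omega> \<noteq> {}" and "bounded \<Omega>"
    and "dI > 0"
    and "continuous_on (closure \<Omega>) \<gamma>" and "\<forall>x\<in>closure \<Omega>. \<gamma> x > 0"
    and "continuous_on UNIV J" and "J 0 > 0"
    and "\<forall>x. J x = J (- x) \<and> J x \<ge> 0"
    and "(J has_integral 1) UNIV"
    and "\<exists>x\<in>closure \<Omega>. integral \<Omega> (\<lambda>y. J (x - y)) \<noteq> 1"
  shows "spectral_bound (CX (closure \<Omega>)) (nonlocal_op dI J \<gamma> \<Omega>) < 0"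
proof -
  obtain x0 where x0: "x0 \<in> closure \<Omega>" "\<And>y. y \<in> closure \<Omega> \<Longrightarrow> \<gamma> x0 \<le> \<gamma> y"
    using continuous_attains_inf[OF _ _ assms(6)] assms(3,4) closure_subset compact_closure
    by (metis subset_empty)
  have \<Omega>: "\<Omega> \<in> sets lebesgue"
    using assms(1) by simp
  have J_nonneg: "0 \<le> J z" for z
    using assms(10) by simp
  have "Re \<mu> \<le> - \<gamma> x0" if "\<mu> \<in> op_spectrum (CX (closure \<Omega>)) (nonlocal_op dI J \<gamma> \<Omega>)" for \<mu>
  proof (rule ccontr)
    assume "\<not> Re \<mu> \<le> - \<gamma> x0"
    then have "dI < Re \<mu> + dI + \<gamma> x0"
      by simp
    moreover have "Re \<mu> + dI + \<gamma> x0 \<le> norm (\<mu> + dI + \<gamma> x)" if "x \<in> closure \<Omega>" for x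
      using x0(2)[OF that] complex_Re_le_cmod[of "\<mu> + dI + \<gamma> x"] by simp
    ultimately have "bij_betw (\<lambda>u x. \<mu> * u x - nonlocal_op dI J \<gamma> \<Omega> u x) (CX (closure \<Omega>)) (CX (closure \<Omega>))"
      using assms(5)
      by (intro bij_betw_shifted_nonlocal_op[OF \<Omega> assms(4,8) J_nonneg assms(11) _ _ assms(6)]) auto
    then show False
      using that by (simp add: op_spectrum_def)
  qed
  then have "spectral_bound (CX (closure \<Omega>)) (nonlocal_op dI J \<gamma> \<Omega>) \<le> ereal (- \<gamma> x0)"
    unfolding spectral_bound_def by (auto intro!: SUP_least)
  also have "\<dots> < 0"
    using assms(7) x0(1) by simp
  finally show ?thesis .
qed

end
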